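(* Let $(X,d)$ be a complete metric space, $\lambda>0$, and $\ell\in\mathrm{LSC}(X)$ bounded with $\inf_X\ell=0$. Then there exists a unique solution of $(\mathcal{G}_\lambda)$. Moreover, this solution is bounded and Lipschitz.
   Context: $\mathrm{LSC}(X)$ is the set of real-valued lower semicontinuous functions on $X$. Global slope: $G[u](x)=\sup_{y\neq x}\frac{(u(x)-u(y))_+}{d(x,y)}$ if $u(x)<+\infty$, $G[u](x)=+\infty$ otherwise. Equation $(\mathcal{G}_\lambda)$: a solution is a lower semicontinuous $u:X\to\mathbb{R}\cup\{+\infty\}$ with $\inf_Xu=0$ and $\lambda u(x)+G[u](x)=\ell(x)$ for all $x\in X$. *)

theory Defs
  imports "HOL-Analysis.Analysis" "HOL-Library.Extended_Real"
begin

definition lsc :: "('a::topological_space \<Rightarrow> 'b::linorder) \<Rightarrow> bool" where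
  "lsc f \<longleftrightarrow> (\<forall>t. open {x. t < f x})"

text \<open>Global slope of u : X -> R \<union> {+\<infinity>} (represented in ereal, never -\<infinity>).
  The supremum over y \<noteq> x of the positive part of (u x - u y)/d(x,y); the term for y = x
  is replaced by 0, which is harmless since all terms are nonnegative (and gives 0 if X = {x}).\<close>
definition global_slope :: "('a::metric_space \<Rightarrow> ereal) \<Rightarrow> 'a \<Rightarrow> ereal" where
  "global_slope u x = (if u x = \<infinity> then \<infinity>
     else (SUP y. if y = x then 0 else max 0 (u x - u y) / ereal (dist x y)))"

definition is_solution_G :: "real \<Rightarrow> ('a::metric_space \<Rightarrow> real) \<Rightarrow> ('a \<Rightarrow> ereal) \<Rightarrow> bool" where
  "is_solution_G lam ell u \<longleftrightarrow>
     (\<forall>x. u x \<noteq> -\<infinity>) \<and> lsc u \<and> (INF x. u x) = 0 \<and>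
     (\<forall>x. ereal lam * u x + global_slope u x = ereal (ell x))"

end

theory Submission
  imports Defs
begin

text \<open>
  Call w a subsolution if \<open>\<lambda> w + G[w] \<le> \<ell>\<close>; for real-valued w this is the cone condition
  \<open>w x - w y \<le> (\<ell> x - \<lambda> w x) d(x,y)\<close>. Subsolutions are bounded by \<open>\<ell>/\<lambda>\<close>, so
  Perron's method applies: their pointwise supremum v is again a subsolution, and it is a
  solution, since at a point where the inequality were strict, the lower semicontinuity of
  \<open>\<ell>\<close> would allow to raise v by a small cone and get a larger subsolution.
  For uniqueness, a solution U dominates every nonnegative subsolution W: otherwise
  Ekeland's variational principle, applied to the continuous function \<open>U - W\<close> with a small
  slope, produces a point where the slope of U is too small for the equation.
  Boundedness by \<open>sup \<ell> / \<lambda>\<close> and the Lipschitz bound \<open>sup \<ell>\<close> come from the cone condition.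
\<close>

lemma global_slope_le_ereal_iff:
  fixes U :: "'a::metric_space \<Rightarrow> real"
  shows "global_slope (\<lambda>x. ereal (U x)) x \<le> ereal c \<longleftrightarrow> 0 \<le> c \<and> (\<forall>y. U x - U y \<le> c * dist x y)"
proof -
  have term_le: "(if y = x then 0 else max 0 (ereal (U x) - ereal (U y)) / ereal (dist x y)) \<le> ereal c
      \<longleftrightarrow> 0 \<le> c \<and> U x - U y \<le> c * dist x y" for y
  proof (cases "y = x")
    case False
    then have "0 < dist x y" by simp
    moreover have "max 0 (ereal (U x) - ereal (U y)) / ereal (dist x y) = ereal (max 0 (U x - U y) / dist x y)"
      using False by (simp add: max_def)
    ultimately show ?thesis
      using False by (simp add: pos_divide_le_eq zero_le_mult_iff)
  qed simp
  have finite: "ereal (U x) \<noteq> \<infinity>" by simp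
  have "global_slope (\<lambda>x. ereal (U x)) x \<le> ereal c \<longleftrightarrow> (\<forall>y. 0 \<le> c \<and> U x - U y \<le> c * dist x y)"
    unfolding global_slope_def by (simp only: finite if_False SUP_le_iff ball_UNIV term_le)
  then show ?thesis by auto
qed

lemma lsc_if_continuous:
  fixes f :: "'a::topological_space \<Rightarrow> 'b::linorder_topology"
  assumes "continuous_on UNIV f"
  shows "lsc f"
  unfolding lsc_def using open_Collect_less[OF continuous_on_const assms] by blast

definition ekeland_set :: "('a::metric_space \<Rightarrow> real) \<Rightarrow> real \<Rightarrow> 'a \<Rightarrow> 'a set" where
  "ekeland_set f k x = {y. f y + k * dist x y \<le> f x}"

lemma ekeland_set_refl: "x \<in> ekeland_set f k x"
  by (simp add: ekeland_set_def)

lemma ekeland_set_trans: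
  assumes "0 \<le> k" and "y \<in> ekeland_set f k x"
  shows "ekeland_set f k y \<subseteq> ekeland_set f k x"
proof
  fix z assume "z \<in> ekeland_set f k y"
  have "k * dist x z \<le> k * dist x y + k * dist y z"
    using mult_left_mono[OF dist_triangle[of x z y] \<open>0 \<le> k\<close>] by (simp add: distrib_left)
  with assms(2) \<open>z \<in> ekeland_set f k y\<close> show "z \<in> ekeland_set f k x"
    by (simp add: ekeland_set_def)
qed

lemma closed_ekeland_set:
  assumes "continuous_on UNIV f"
  shows "closed (ekeland_set f k x)"
  unfolding ekeland_set_def
  by (intro closed_Collect_le continuous_intros continuous_on_subset[OF assms]) auto

text \<open>The points \<open>s (Suc n)\<close> are chosen almost minimising f on their Ekeland sets, so these sets
  form a closed nest with vanishing diameters; its single point is the required z.\<close>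

lemma ekeland_sequence:
  fixes f :: "'a::metric_space \<Rightarrow> real"
  assumes lower: "\<And>x. m \<le> f x" and "0 \<le> k"
  obtains s where "s 0 = a" and "\<And>n. s (Suc n) \<in> ekeland_set f k (s n)"
    and "\<And>n y. y \<in> ekeland_set f k (s (Suc n)) \<Longrightarrow> k * dist (s (Suc n)) y \<le> 1 / Suc n"
proof -
  let ?S = "ekeland_set f k"
  have f_bdd: "bdd_below (f ` ?S x)" for x
    using lower by (rule bdd_belowI2)
  have "\<exists>y \<in> ?S x. f y \<le> Inf (f ` ?S x) + 1 / Suc n" for x n
  proof -
    have "f ` ?S x \<noteq> {}"
      using ekeland_set_refl[of x f k] by blast
    moreover have "Inf (f ` ?S x) < Inf (f ` ?S x) + 1 / Suc n" by simp
    ultimately have "\<exists>t \<in> f ` ?S x. t < Inf (f ` ?S x) + 1 / Suc n"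
      by (rule cInf_lessD)
    then show ?thesis by (auto intro: less_imp_le)
  qed
  then obtain g where g: "\<And>x n. g x n \<in> ?S x" "\<And>x n. f (g x n) \<le> Inf (f ` ?S x) + 1 / Suc n"
    by metis
  define s where "s = rec_nat a (\<lambda>n x. g x n)"
  have s_Suc: "s (Suc n) = g (s n) n" for n
    by (simp add: s_def)
  show thesis
  proof
    show "s 0 = a" by (simp add: s_def)
    show "s (Suc n) \<in> ?S (s n)" for n
      using g(1) by (simp add: s_Suc)
    fix n y assume y: "y \<in> ?S (s (Suc n))"
    then have "y \<in> ?S (s n)"
      using ekeland_set_trans[OF \<open>0 \<le> k\<close> g(1)[of "s n" n]] by (auto simp: s_Suc)
    then have "Inf (f ` ?S (s n)) \<le> f y"
      by (rule cInf_lower[OF imageI f_bdd])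
    with y g(2)[of "s n" n] show "k * dist (s (Suc n)) y \<le> 1 / Suc n"
      by (simp add: ekeland_set_def s_Suc)
  qed
qed

lemma ekeland_variational_principle:
  fixes f :: "'a::complete_space \<Rightarrow> real"
  assumes cont: "continuous_on UNIV f" and lower: "\<And>x. m \<le> f x" and "0 < k"
  obtains z where "f z + k * dist x0 z \<le> f x0" and "\<And>y. y \<noteq> z \<Longrightarrow> f z < f y + k * dist z y"
proof -
  let ?S = "ekeland_set f k"
  obtain s where s_0: "s 0 = x0" and s_Suc: "\<And>n. s (Suc n) \<in> ?S (s n)"
    and small: "\<And>n y. y \<in> ?S (s (Suc n)) \<Longrightarrow> k * dist (s (Suc n)) y \<le> 1 / Suc n"
    using ekeland_sequence[where f = f and a = x0, OF lower less_imp_le[OF \<open>0 < k\<close>]] by blast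
  have S_trans: "?S y \<subseteq> ?S x" if "y \<in> ?S x" for x y
    using ekeland_set_trans[OF _ that] \<open>0 < k\<close> by simp
  define T where "T n = ?S (s (Suc n))" for n
  have T_closed: "closed (T n)" and T_nonempty: "T n \<noteq> {}" for n
    using closed_ekeland_set[OF cont] ekeland_set_refl[of "s (Suc n)" f k] by (auto simp: T_def)
  have "T (Suc n) \<subseteq> T n" for n
    using S_trans[OF s_Suc] by (simp add: T_def)
  then have T_antimono: "T n \<subseteq> T m" if "m \<le> n" for m n
    using lift_Suc_antimono_le[of T, OF _ that] by blast
  have T_shrinks: "\<exists>n. \<forall>x \<in> T n. \<forall>y \<in> T n. dist x y < e" if "0 < e" for e
  proof -
    obtain n :: nat where "2 / (k * e) < n"
      using reals_Archimedean2 by blast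
    then have "2 / (k * e) < Suc n" by simp
    then have n: "2 / Suc n < k * e"
      using \<open>0 < k\<close> \<open>0 < e\<close> by (simp add: pos_divide_less_eq divide_less_eq mult.commute del: of_nat_Suc)
    have "dist x y < e" if "x \<in> T n" "y \<in> T n" for x y
    proof -
      have "k * dist x y \<le> k * dist (s (Suc n)) x + k * dist (s (Suc n)) y"
        using \<open>0 < k\<close> dist_triangle3[of x y "s (Suc n)"] by (simp add: distrib_left[symmetric])
      also have "\<dots> \<le> 2 / Suc n"
        using small[OF that(1)[unfolded T_def]] small[OF that(2)[unfolded T_def]] by simp
      also have "\<dots> < k * e" by (fact n)
      finally show ?thesis using \<open>0 < k\<close> by simp
    qed
    then show ?thesis by auto
  qed
  obtain z where z: "\<Inter> (range T) = {z}"
    using decreasing_closed_nest_sing[OF T_closed T_nonempty T_antimono T_shrinks] by blast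
  then have z_T: "z \<in> T n" for n by blast
  show thesis
  proof
    have "z \<in> ?S (s 0)"
      using z_T[of 0, unfolded T_def] S_trans[OF s_Suc[of 0]] by blast
    then show "f z + k * dist x0 z \<le> f x0" by (simp add: ekeland_set_def s_0)
  next
    fix y assume "y \<noteq> z"
    have "y \<notin> ?S z"
    proof
      assume "y \<in> ?S z"
      moreover have "?S z \<subseteq> T n" for n
        using S_trans[OF z_T[of n, unfolded T_def]] by (simp add: T_def)
      ultimately have "y \<in> \<Inter> (range T)" by blast
      with z \<open>y \<noteq> z\<close> show False by blast
    qed
    then show "f z < f y + k * dist z y" by (simp add: ekeland_set_def)
  qed
qed

definition subsolution_at :: "real \<Rightarrow> ('a::metric_space \<Rightarrow> real) \<Rightarrow> ('a \<Rightarrow> real) \<Rightarrow> 'a \<Rightarrow> bool" where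
  "subsolution_at lam ell w x \<longleftrightarrow>
     lam * w x \<le> ell x \<and> (\<forall>y. w x - w y \<le> (ell x - lam * w x) * dist x y)"

definition subsolution :: "real \<Rightarrow> ('a::metric_space \<Rightarrow> real) \<Rightarrow> ('a \<Rightarrow> real) \<Rightarrow> bool" where
  "subsolution lam ell w \<longleftrightarrow> (\<forall>x. subsolution_at lam ell w x)"

lemma subsolution_at_iff_global_slope:
  "subsolution_at lam ell w x \<longleftrightarrow> global_slope (\<lambda>x. ereal (w x)) x \<le> ereal (ell x - lam * w x)"
  unfolding subsolution_at_def global_slope_le_ereal_iff by simp

lemma subsolution_at_if_below:
  assumes "subsolution_at lam ell w x" and "\<And>y. w y \<le> v y" and "v x = w x"
  shows "subsolution_at lam ell v x"
  using assms unfolding subsolution_at_def by (metis diff_mono order_trans)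

lemma subsolution_at_cone:
  assumes "lam * (a - \<kappa> * dist x0 x) + \<kappa> \<le> ell x" and "0 \<le> \<kappa>"
  shows "subsolution_at lam ell (\<lambda>y. a - \<kappa> * dist x0 y) x"
  unfolding subsolution_at_def
proof (intro conjI allI)
  show "lam * (a - \<kappa> * dist x0 x) \<le> ell x" using assms by linarith
next
  fix y
  have "(a - \<kappa> * dist x0 x) - (a - \<kappa> * dist x0 y) \<le> \<kappa> * dist x y"
    using \<open>0 \<le> \<kappa>\<close> dist_triangle[of x0 y x] by (simp add: dist_commute mult_left_mono flip: right_diff_distrib)
  also have "\<dots> \<le> (ell x - lam * (a - \<kappa> * dist x0 x)) * dist x y"
    using assms(1) by (intro mult_right_mono) auto
  finally show "(a - \<kappa> * dist x0 x) - (a - \<kappa> * dist x0 y) \<le> (ell x - lam * (a - \<kappa> * dist x0 x)) * dist x y" .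
qed

lemma subsolution_le_divide:
  assumes "0 < lam" and "subsolution lam ell w"
  shows "w x \<le> ell x / lam"
  using assms by (simp add: subsolution_def subsolution_at_def pos_le_divide_eq mult.commute)

lemma subsolution_lipschitz:
  assumes "subsolution lam ell w" and "\<And>x. 0 \<le> w x" and "0 \<le> lam" and "\<And>x. ell x \<le> B"
  shows "\<bar>w x - w y\<bar> \<le> B * dist x y"
proof -
  have "w a - w b \<le> B * dist a b" for a b
  proof -
    have "w a - w b \<le> (ell a - lam * w a) * dist a b"
      using assms(1) by (simp add: subsolution_def subsolution_at_def)
    also have "\<dots> \<le> B * dist a b"
    proof (rule mult_right_mono)
      have "0 \<le> lam * w a" using assms(2)[of a] assms(3) by simp
      then show "ell a - lam * w a \<le> B" using assms(4)[of a] by linarith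
    qed simp
    finally show ?thesis .
  qed
  from this[of x y] this[of y x] show ?thesis by (simp add: dist_commute abs_le_iff)
qed

lemma continuous_on_subsolution:
  assumes "subsolution lam ell w" and "\<And>x. 0 \<le> w x" and "0 \<le> lam" and "\<And>x. ell x \<le> B"
  shows "continuous_on UNIV w"
proof -
  have "0 \<le> B"
  proof -
    fix x
    have "0 \<le> lam * w x" and "lam * w x \<le> ell x"
      using assms(1-3) by (simp_all add: subsolution_def subsolution_at_def)
    with assms(4)[of x] show ?thesis by linarith
  qed
  then show ?thesis
    using subsolution_lipschitz[OF assms]
    by (intro lipschitz_on_continuous_on[of B] lipschitz_onI) (auto simp: dist_real_def)
qed

definition perron_solution :: "real \<Rightarrow> ('a::metric_space \<Rightarrow> real) \<Rightarrow> 'a \<Rightarrow> real" where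
  "perron_solution lam ell x = (SUP w \<in> {w. subsolution lam ell w}. w x)"

lemma perron_solution_upper:
  assumes "0 < lam" and "subsolution lam ell w"
  shows "w x \<le> perron_solution lam ell x"
  unfolding perron_solution_def
  using assms subsolution_le_divide by (intro cSUP_upper bdd_aboveI2) auto

lemma subsolution_zero:
  assumes "\<And>x. 0 \<le> ell x"
  shows "subsolution lam ell (\<lambda>_. 0)"
  using assms by (simp add: subsolution_def subsolution_at_def)

lemma perron_solution_nonneg:
  assumes "0 < lam" and "\<And>x. 0 \<le> ell x"
  shows "0 \<le> perron_solution lam ell x"
  using perron_solution_upper[OF assms(1) subsolution_zero[of ell lam, OF assms(2)]] .

lemma subsolution_perron_solution:
  assumes "0 < lam" and "\<And>x. 0 \<le> ell x"
  shows "subsolution lam ell (perron_solution lam ell)"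
  unfolding subsolution_def subsolution_at_def
proof (intro allI conjI)
  let ?v = "perron_solution lam ell"
  have nonempty: "{w. subsolution lam ell w} \<noteq> {}"
    using subsolution_zero[of ell lam, OF assms(2)] by blast
  fix x
  have "?v x \<le> ell x / lam"
    unfolding perron_solution_def using nonempty subsolution_le_divide[OF assms(1)]
    by (intro cSUP_least) auto
  then show "lam * ?v x \<le> ell x"
    using assms(1) by (simp add: pos_le_divide_eq mult.commute)
  fix y
  have pos: "0 < 1 + lam * dist x y"
    using assms(1) by (simp add: add_pos_nonneg)
  \<comment> \<open>In the form \<open>w x * (1 + lam * dist x y) \<le> ell x * dist x y + w y\<close> the cone condition
    is monotone in \<open>w y\<close>, so it passes to the supremum.\<close>
  have "?v x \<le> (ell x * dist x y + ?v y) / (1 + lam * dist x y)"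
    unfolding perron_solution_def[of lam ell x]
  proof (rule cSUP_least[OF nonempty])
    fix w assume "w \<in> {w. subsolution lam ell w}"
    then have "w x - w y \<le> (ell x - lam * w x) * dist x y" and "w y \<le> ?v y"
      using perron_solution_upper[OF assms(1)] by (auto simp: subsolution_def subsolution_at_def)
    then have "w x * (1 + lam * dist x y) \<le> ell x * dist x y + ?v y"
      by (simp add: algebra_simps)
    then show "w x \<le> (ell x * dist x y + ?v y) / (1 + lam * dist x y)"
      using pos by (simp add: pos_le_divide_eq)
  qed
  then have "?v x * (1 + lam * dist x y) \<le> ell x * dist x y + ?v y"
    using pos by (simp add: pos_le_divide_eq)
  then show "?v x - ?v y \<le> (ell x - lam * ?v x) * dist x y"
    by (simp add: algebra_simps)
qed

lemma subsolution_max_cone: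
  assumes v: "subsolution lam ell v" and "0 \<le> \<kappa>"
    and cone_ok: "\<And>z. v z < a - \<kappa> * dist x0 z \<Longrightarrow> lam * (a - \<kappa> * dist x0 z) + \<kappa> \<le> ell z"
  shows "subsolution lam ell (\<lambda>y. max (v y) (a - \<kappa> * dist x0 y))"
  unfolding subsolution_def
proof
  fix z
  show "subsolution_at lam ell (\<lambda>y. max (v y) (a - \<kappa> * dist x0 y)) z"
  proof (cases "a - \<kappa> * dist x0 z \<le> v z")
    case True
    have "subsolution_at lam ell v z"
      using v by (simp add: subsolution_def)
    then show ?thesis
      by (rule subsolution_at_if_below) (use True in auto)
  next
    case False
    then have "lam * (a - \<kappa> * dist x0 z) + \<kappa> \<le> ell z"
      by (intro cone_ok) simp
    then have "subsolution_at lam ell (\<lambda>y. a - \<kappa> * dist x0 y) z"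
      using \<open>0 \<le> \<kappa>\<close> by (rule subsolution_at_cone)
    then show ?thesis
      by (rule subsolution_at_if_below) (use False in auto)
  qed
qed

text \<open>If v grows from x0 with a slope t strictly below \<open>\<ell> x0 - \<lambda> v x0\<close>, a cone of slope
  slightly above t and apex slightly above \<open>v x0\<close> can be put on top of v. It exceeds v only
  in a small ball around x0, where lower semicontinuity keeps \<open>\<ell>\<close> large enough.\<close>

lemma subsolution_bump:
  fixes ell :: "'a::metric_space \<Rightarrow> real"
  assumes "0 < lam" and "lsc ell" and v: "subsolution lam ell v" and "0 \<le> t"
    and t_less: "t < ell x0 - lam * v x0" and v_cone: "\<And>y. v x0 - v y \<le> t * dist x0 y"
  obtains w where "subsolution lam ell w" and "v x0 < w x0"
proof -
  define \<eta> where "\<eta> = ell x0 - lam * v x0 - t"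
  have "0 < \<eta>" using t_less by (simp add: \<eta>_def)
  have "open {y. ell x0 - \<eta> / 4 < ell y}" and "x0 \<in> {y. ell x0 - \<eta> / 4 < ell y}"
    using \<open>lsc ell\<close> \<open>0 < \<eta>\<close> by (auto simp: lsc_def)
  then obtain r where "0 < r" and "ball x0 r \<subseteq> {y. ell x0 - \<eta> / 4 < ell y}"
    by (rule openE)
  then have near: "\<And>y. dist x0 y < r \<Longrightarrow> ell x0 - \<eta> / 4 < ell y"
    by auto
  define \<kappa> where "\<kappa> = t + \<eta> / 2"
  define \<theta> where "\<theta> = min (\<eta> / (4 * lam)) (\<eta> * r / 4)"
  have "0 \<le> \<kappa>" and "0 < \<theta>" and "\<theta> \<le> \<eta> * r / 4"
    using \<open>0 \<le> t\<close> \<open>0 < \<eta>\<close> \<open>0 < r\<close> \<open>0 < lam\<close> by (simp_all add: \<kappa>_def \<theta>_def)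
  have "\<theta> \<le> \<eta> / (4 * lam)"
    by (simp add: \<theta>_def)
  then have "lam * \<theta> \<le> \<eta> / 4"
    using \<open>0 < lam\<close> by (simp add: le_divide_eq mult.commute)
  define a where "a = v x0 + \<theta>"
  have "lam * (a - \<kappa> * dist x0 z) + \<kappa> \<le> ell z" if above: "v z < a - \<kappa> * dist x0 z" for z
  proof -
    have "dist x0 z < r"
    proof (rule ccontr)
      assume "\<not> dist x0 z < r"
      then have "\<eta> * r \<le> \<eta> * dist x0 z"
        using \<open>0 < \<eta>\<close> by (intro mult_left_mono) auto
      moreover have "\<kappa> * dist x0 z = t * dist x0 z + \<eta> * dist x0 z / 2"
        by (simp add: \<kappa>_def algebra_simps)
      moreover have "0 < \<eta> * r"
        using \<open>0 < \<eta>\<close> \<open>0 < r\<close> by simp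
      ultimately show False
        using above v_cone[of z] \<open>\<theta> \<le> \<eta> * r / 4\<close> a_def by linarith
    qed
    have "0 \<le> \<kappa> * dist x0 z"
      using \<open>0 \<le> \<kappa>\<close> by simp
    then have "lam * (a - \<kappa> * dist x0 z) \<le> lam * a"
      using \<open>0 < lam\<close> by (intro mult_left_mono) auto
    also have "\<dots> = lam * v x0 + lam * \<theta>"
      by (simp add: a_def distrib_left)
    finally show ?thesis
      using near[OF \<open>dist x0 z < r\<close>] \<open>lam * \<theta> \<le> \<eta> / 4\<close> \<kappa>_def \<eta>_def by linarith
  qed
  with v \<open>0 \<le> \<kappa>\<close> have "subsolution lam ell (\<lambda>y. max (v y) (a - \<kappa> * dist x0 y))"
    by (rule subsolution_max_cone)
  moreover have "v x0 < max (v x0) (a - \<kappa> * dist x0 x0)"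
    using \<open>0 < \<theta>\<close> by (simp add: a_def)
  ultimately show thesis
    by (rule that)
qed

lemma global_slope_maximal_subsolution:
  fixes ell :: "'a::metric_space \<Rightarrow> real"
  assumes "0 < lam" and "lsc ell" and v: "subsolution lam ell v"
    and maximal: "\<And>w. subsolution lam ell w \<Longrightarrow> w x0 \<le> v x0"
  shows "global_slope (\<lambda>x. ereal (v x)) x0 = ereal (ell x0 - lam * v x0)"
proof -
  have "global_slope (\<lambda>x. ereal (v x)) x0 \<le> ereal (ell x0 - lam * v x0)"
    using v by (simp add: subsolution_def subsolution_at_iff_global_slope)
  moreover have "\<not> global_slope (\<lambda>x. ereal (v x)) x0 < ereal (ell x0 - lam * v x0)"
  proof
    assume "global_slope (\<lambda>x. ereal (v x)) x0 < ereal (ell x0 - lam * v x0)"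
    then obtain t where t: "global_slope (\<lambda>x. ereal (v x)) x0 < ereal t"
      and "ereal t < ereal (ell x0 - lam * v x0)"
      using ereal_dense2 by blast
    then have "t < ell x0 - lam * v x0" by simp
    from t have "0 \<le> t" and v_cone: "\<And>y. v x0 - v y \<le> t * dist x0 y"
      by (auto simp: global_slope_le_ereal_iff dest: less_imp_le)
    obtain w where "subsolution lam ell w" and "v x0 < w x0"
      using subsolution_bump[OF assms(1-3) \<open>0 \<le> t\<close> \<open>t < ell x0 - lam * v x0\<close> v_cone] by blast
    with maximal show False by (meson not_le)
  qed
  ultimately show ?thesis by simp
qed

lemma subsolution_le_solution:
  fixes U W :: "'a::complete_space \<Rightarrow> real"
  assumes "0 < lam" and ell_le: "\<And>x. ell x \<le> B"
    and W: "subsolution lam ell W" "\<And>x. 0 \<le> W x"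
    and U: "\<And>x. 0 \<le> U x" "\<And>x. global_slope (\<lambda>x. ereal (U x)) x = ereal (ell x - lam * U x)"
  shows "W x \<le> U x"
proof (rule ccontr)
  assume "\<not> W x \<le> U x"
  define \<delta> where "\<delta> = W x - U x"
  have "0 < \<delta>" using \<open>\<not> W x \<le> U x\<close> by (simp add: \<delta>_def)
  have U_sub: "subsolution lam ell U"
    using U(2) by (simp add: subsolution_def subsolution_at_iff_global_slope)
  have W_le: "W y \<le> B / lam" for y
  proof -
    have "W y \<le> ell y / lam" by (rule subsolution_le_divide[OF \<open>0 < lam\<close> W(1)])
    also have "\<dots> \<le> B / lam" using ell_le[of y] \<open>0 < lam\<close> by (simp add: divide_right_mono)
    finally show ?thesis .
  qed
  have cont: "continuous_on UNIV (\<lambda>y. U y - W y)"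
    using continuous_on_subsolution[OF U_sub U(1) _ ell_le]
      continuous_on_subsolution[OF W _ ell_le] \<open>0 < lam\<close>
    by (intro continuous_on_diff) auto
  have lower: "- (B / lam) \<le> U y - W y" for y
    using U(1)[of y] W_le[of y] by linarith
  define k where "k = lam * \<delta> / 2"
  have "0 < k" using \<open>0 < lam\<close> \<open>0 < \<delta>\<close> by (simp add: k_def)
  obtain z where z_below: "U z - W z + k * dist x z \<le> U x - W x"
    and z_min: "\<And>y. y \<noteq> z \<Longrightarrow> U z - W z < U y - W y + k * dist z y"
    using ekeland_variational_principle[OF cont lower \<open>0 < k\<close>, of x] by blast
  have "0 \<le> ell z - lam * W z + k \<and> (\<forall>y. U z - U y \<le> (ell z - lam * W z + k) * dist z y)"
  proof (intro conjI allI)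
    have "lam * W z \<le> ell z" using W(1) by (simp add: subsolution_def subsolution_at_def)
    then show "0 \<le> ell z - lam * W z + k" using \<open>0 < k\<close> by simp
  next
    fix y
    have "U z - U y \<le> W z - W y + k * dist z y"
      using z_min[of y] by (cases "y = z") auto
    also have "W z - W y \<le> (ell z - lam * W z) * dist z y"
      using W(1) by (simp add: subsolution_def subsolution_at_def)
    finally show "U z - U y \<le> (ell z - lam * W z + k) * dist z y"
      by (simp add: algebra_simps)
  qed
  then have "ell z - lam * U z \<le> ell z - lam * W z + k"
    using U(2)[of z] global_slope_le_ereal_iff[of U z] by simp
  moreover have "\<delta> \<le> W z - U z"
    using z_below \<open>0 < k\<close> zero_le_dist[of x z] mult_nonneg_nonneg[of k "dist x z"]
    unfolding \<delta>_def by linarith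
  then have "lam * \<delta> \<le> lam * (W z - U z)"
    using \<open>0 < lam\<close> by simp
  ultimately show False
    using mult_pos_pos[OF \<open>0 < lam\<close> \<open>0 < \<delta>\<close>] unfolding k_def right_diff_distrib by linarith
qed

lemma abs_perron_solution_le:
  assumes "0 < lam" and "\<And>x. 0 \<le> ell x" and "\<And>x. ell x \<le> B"
  shows "\<bar>perron_solution lam ell x\<bar> \<le> B / lam"
proof -
  have "perron_solution lam ell x \<le> ell x / lam"
    using subsolution_perron_solution[of lam ell, OF assms(1,2)] by (rule subsolution_le_divide[OF assms(1)])
  also have "\<dots> \<le> B / lam"
    using assms(1,3) by (simp add: divide_right_mono)
  finally show ?thesis
    using perron_solution_nonneg[of lam ell, OF assms(1,2)] by simp
qed

lemma perron_solution_lipschitz: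
  assumes "0 < lam" and "\<And>x. 0 \<le> ell x" and "\<And>x. ell x \<le> B"
  shows "\<bar>perron_solution lam ell x - perron_solution lam ell y\<bar> \<le> B * dist x y"
  using subsolution_lipschitz[OF subsolution_perron_solution[of lam ell, OF assms(1,2)]
      perron_solution_nonneg[of lam ell, OF assms(1,2)] _ assms(3)] assms(1)
  by simp

lemma is_solution_G_real_valued:
  assumes "0 < lam" and "is_solution_G lam ell u"
  obtains U where "u = (\<lambda>x. ereal (U x))" and "\<And>x. 0 \<le> U x"
    and "\<And>x. global_slope u x = ereal (ell x - lam * U x)"
proof -
  have not_MInf: "u x \<noteq> -\<infinity>" and inf_0: "(INF x. u x) = 0"
    and equation: "ereal lam * u x + global_slope u x = ereal (ell x)" for x
    using assms(2) by (auto simp: is_solution_G_def)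
  have not_PInf: "u x \<noteq> \<infinity>" for x
  proof
    assume "u x = \<infinity>"
    then have "global_slope u x = \<infinity>" by (simp add: global_slope_def)
    with \<open>u x = \<infinity>\<close> equation[of x] \<open>0 < lam\<close> show False by simp
  qed
  define U where "U x = real_of_ereal (u x)" for x
  have u_eq: "u = (\<lambda>x. ereal (U x))"
    using not_MInf not_PInf by (auto simp: U_def fun_eq_iff intro: ereal_real'[symmetric])
  show thesis
  proof
    show "0 \<le> U x" for x
      using INF_lower[of x UNIV u] inf_0 by (simp add: u_eq)
    show "global_slope u x = ereal (ell x - lam * U x)" for x
      using equation[of x] \<open>0 < lam\<close> by (cases "global_slope u x") (auto simp: u_eq)
  qed (fact u_eq)
qed

lemma is_solution_G_perron_solution:
  assumes "0 < lam" and "lsc ell" and "\<And>x. 0 \<le> ell x" and "\<And>x. ell x \<le> B"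
    and "(INF x. ell x) = 0"
  shows "is_solution_G lam ell (\<lambda>x. ereal (perron_solution lam ell x))"
  unfolding is_solution_G_def
proof (intro conjI allI)
  let ?v = "perron_solution lam ell"
  have v_sub: "subsolution lam ell ?v" and v_nonneg: "\<And>x. 0 \<le> ?v x"
    using subsolution_perron_solution[of lam ell, OF assms(1,3)]
      perron_solution_nonneg[of lam ell, OF assms(1,3)] by auto
  show "lsc (\<lambda>x. ereal (?v x))"
    using continuous_on_subsolution[OF v_sub v_nonneg _ assms(4)] assms(1)
    by (intro lsc_if_continuous continuous_on_ereal) auto
  show "(INF x. ereal (?v x)) = 0"
  proof (rule antisym)
    show "0 \<le> (INF x. ereal (?v x))"
      using v_nonneg by (simp add: INF_greatest)
    show "(INF x. ereal (?v x)) \<le> 0"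
    proof (rule ereal_le_epsilon2)
      fix e :: real assume "0 < e"
      then have "Inf (range ell) < lam * e" using assms(1,5) by simp
      then obtain x where "ell x < lam * e"
        using cInf_lessD by blast
      then have "ell x / lam < e"
        using assms(1) by (simp add: pos_divide_less_eq mult.commute)
      then have "?v x < e"
        using subsolution_le_divide[OF assms(1) v_sub, of x] by linarith
      then have "ereal (?v x) \<le> 0 + ereal e" by simp
      then show "(INF x. ereal (?v x)) \<le> 0 + ereal e"
        by (rule INF_lower2[OF UNIV_I])
    qed
  qed
  fix x
  show "ereal (?v x) \<noteq> -\<infinity>" by simp
  have "global_slope (\<lambda>x. ereal (?v x)) x = ereal (ell x - lam * ?v x)"
    using assms(1,2) v_sub perron_solution_upper[OF assms(1)] by (rule global_slope_maximal_subsolution)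
  then show "ereal lam * ereal (?v x) + global_slope (\<lambda>x. ereal (?v x)) x = ereal (ell x)"
    by simp
qed

lemma is_solution_G_eq_perron_solution:
  fixes ell :: "'a::complete_space \<Rightarrow> real"
  assumes "0 < lam" and "\<And>x. 0 \<le> ell x" and "\<And>x. ell x \<le> B" and "is_solution_G lam ell u"
  shows "u = (\<lambda>x. ereal (perron_solution lam ell x))"
proof -
  obtain U where u_eq: "u = (\<lambda>x. ereal (U x))" and U_nonneg: "\<And>x. 0 \<le> U x"
    and U_slope: "\<And>x. global_slope u x = ereal (ell x - lam * U x)"
    using is_solution_G_real_valued[OF assms(1,4)] by blast
  have "subsolution lam ell U"
    using U_slope by (simp add: u_eq subsolution_def subsolution_at_iff_global_slope)
  then have "U x \<le> perron_solution lam ell x" for x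
    using perron_solution_upper[OF assms(1)] by blast
  moreover have "perron_solution lam ell x \<le> U x" for x
    by (rule subsolution_le_solution[OF assms(1,3) subsolution_perron_solution perron_solution_nonneg U_nonneg])
      (use assms(1,2) U_slope in \<open>simp_all add: u_eq\<close>)
  ultimately show ?thesis
    by (simp add: u_eq fun_eq_iff order_antisym)
qed

theorem corollary3p15:
  fixes ell :: "'a::complete_space \<Rightarrow> real" and lam :: real
  assumes "lam > 0"
    and "lsc ell"
    and "bounded (range ell)"
    and "(INF x. ell x) = 0"
  shows "(\<exists>!u. is_solution_G lam ell u) \<and> (\<forall>u. is_solution_G lam ell u \<longrightarrow>
           (\<exists>M. \<forall>x. \<bar>u x\<bar> \<le> ereal M) \<and>
           (\<exists>L. \<forall>x y. \<bar>real_of_ereal (u x) - real_of_ereal (u y)\<bar> \<le> L * dist x y))"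
proof -
  have ell_nonneg: "0 \<le> ell x" for x
    using cINF_lower[OF bounded_imp_bdd_below[OF assms(3)], of x] assms(4) by simp
  obtain B where ell_le: "ell x \<le> B" for x
    using assms(3) by (meson bounded_real abs_le_D1 rangeI)
  note unique = is_solution_G_eq_perron_solution[where ell = ell, OF assms(1) ell_nonneg ell_le]
  show ?thesis
  proof (intro conjI allI impI)
    show "\<exists>!u. is_solution_G lam ell u"
      using is_solution_G_perron_solution[where ell = ell, OF assms(1,2) ell_nonneg ell_le assms(4)] unique by blast
    fix u assume "is_solution_G lam ell u"
    then have u_eq: "u = (\<lambda>x. ereal (perron_solution lam ell x))" by (rule unique)
    show "\<exists>M. \<forall>x. \<bar>u x\<bar> \<le> ereal M"
      using abs_perron_solution_le[where ell = ell, OF assms(1) ell_nonneg ell_le] by (auto simp: u_eq)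
    show "\<exists>L. \<forall>x y. \<bar>real_of_ereal (u x) - real_of_ereal (u y)\<bar> \<le> L * dist x y"
      using perron_solution_lipschitz[where ell = ell, OF assms(1) ell_nonneg ell_le] by (auto simp: u_eq)
  qed
qed

end
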